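(* Let $A$ and $B$ be Hermitian (bounded) operators on a finite-dimensional Hilbert space, and let $\gamma:[0,\infty)\to\mathbb{R}$ be a non-decreasing continuous function such that $\|e^{-iAt}-e^{-iBt}\|_2\le t\,\gamma(t)$ for all $t\ge 0$. Then $\|A-B\|_2\le\gamma(t)$ for every $t\ge 0$.
   Context: $\|\cdot\|_2$ denotes the operator (spectral) norm. *)

theory Defs
  imports "HOL-Analysis.Analysis"
begin

text \<open>Finite-dimensional Hilbert space modelled as complex^'n (Euclidean norm);
 operators as complex matrices complex^'n^'n.\<close>

definition hermitian :: "complex^'n^'n \<Rightarrow> bool" where
  "hermitian A \<longleftrightarrow> (\<forall>i j. A $ i $ j = cnj (A $ j $ i))"

text \<open>Operator (spectral) norm, induced by the Euclidean norm on complex^'n.\<close>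
definition op_norm :: "complex^'n^'n \<Rightarrow> real" where
  "op_norm A = onorm (\<lambda>x. A *v x)"

fun mat_pow :: "complex^'n^'n \<Rightarrow> nat \<Rightarrow> complex^'n^'n" where
  "mat_pow M 0 = mat 1"
| "mat_pow M (Suc k) = M ** mat_pow M k"

definition mat_exp :: "complex^'n^'n \<Rightarrow> complex^'n^'n" where
  "mat_exp M = (\<Sum>k. (1 / fact k) *\<^sub>R mat_pow M k)"

definition cscale :: "complex \<Rightarrow> complex^'n^'n \<Rightarrow> complex^'n^'n" where
  "cscale c A = (\<chi> i j. c * A $ i $ j)"

end

theory Submission
  imports Defs
begin

text \<open>Second-order Taylor expansion: \<open>exp(-iAt) = 1 - iAt + O(t\<^sup>2)\<close> uniformly for \<open>t \<le> 1\<close>,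
  so the hypothesis gives \<open>t \<parallel>A - B\<parallel> \<le> t \<gamma>(t) + K t\<^sup>2\<close>. Dividing by \<open>t\<close> and letting
  \<open>t \<rightarrow> 0\<^sup>+\<close> yields \<open>\<parallel>A - B\<parallel> \<le> \<gamma>(0) \<le> \<gamma>(t)\<close>.\<close>

text \<open>A submultiplicative norm equivalent to the norm of the vector type \<open>complex^'n^'m\<close>;
  it controls the convergence of the exponential series.\<close>

definition l1_entry_norm :: "complex^'n^'m \<Rightarrow> real" where
  "l1_entry_norm M = (\<Sum>i\<in>UNIV. \<Sum>j\<in>UNIV. cmod (M $ i $ j))"

lemma l1_entry_norm_nonneg: "0 \<le> l1_entry_norm M"
  unfolding l1_entry_norm_def by (intro sum_nonneg) auto

lemma norm_vec_le_sum_norm: "norm (x::'a::real_normed_vector^'n) \<le> (\<Sum>i\<in>UNIV. norm (x $ i))"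
  by (simp add: norm_vec_def L2_set_le_sum)

lemma norm_le_l1_entry_norm: "norm M \<le> l1_entry_norm M"
proof -
  have "norm M \<le> (\<Sum>i\<in>UNIV. norm (M $ i))" by (rule norm_vec_le_sum_norm)
  also have "\<dots> \<le> (\<Sum>i\<in>UNIV. \<Sum>j\<in>UNIV. cmod (M $ i $ j))"
    by (intro sum_mono norm_vec_le_sum_norm)
  finally show ?thesis unfolding l1_entry_norm_def .
qed

lemma l1_entry_norm_le_norm:
  "l1_entry_norm (M::complex^'n^'m) \<le> real CARD('m) * real CARD('n) * norm M"
proof -
  have "l1_entry_norm M \<le> (\<Sum>i\<in>(UNIV::'m set). \<Sum>j\<in>(UNIV::'n set). norm M)"
    unfolding l1_entry_norm_def
    by (intro sum_mono) (metis Finite_Cartesian_Product.norm_nth_le order_trans)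
  then show ?thesis by simp
qed

lemma l1_entry_norm_mult:
  "l1_entry_norm ((M::complex^'k^'m) ** (P::complex^'n^'k)) \<le> l1_entry_norm M * l1_entry_norm P"
proof -
  have "l1_entry_norm (M ** P)
      \<le> (\<Sum>i\<in>UNIV. \<Sum>j\<in>UNIV. \<Sum>k\<in>UNIV. cmod (M$i$k) * cmod (P$k$j))"
    unfolding l1_entry_norm_def matrix_matrix_mult_def
    by (intro sum_mono) (auto intro: order_trans[OF norm_sum] simp: norm_mult)
  also have "\<dots> = (\<Sum>i\<in>UNIV. \<Sum>k\<in>UNIV. cmod (M$i$k) * (\<Sum>j\<in>UNIV. cmod (P$k$j)))"
    by (intro sum.cong refl) (subst sum.swap, simp only: sum_distrib_left)
  also have "\<dots> \<le> (\<Sum>i\<in>UNIV. \<Sum>k\<in>UNIV. cmod (M$i$k) * l1_entry_norm P)"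
    unfolding l1_entry_norm_def
    by (intro sum_mono mult_left_mono member_le_sum[where f="\<lambda>k. \<Sum>j\<in>UNIV. cmod (P$k$j)"])
      (auto intro: sum_nonneg)
  also have "\<dots> = l1_entry_norm M * l1_entry_norm P"
    unfolding l1_entry_norm_def by (simp add: sum_distrib_right)
  finally show ?thesis .
qed

lemma l1_entry_norm_mat_1: "l1_entry_norm (mat 1 :: complex^'n^'n) = real CARD('n)"
  unfolding l1_entry_norm_def mat_def by (simp add: if_distrib cong: if_cong)

lemma l1_entry_norm_mat_pow:
  "l1_entry_norm (mat_pow M k) \<le> real CARD('n) * l1_entry_norm (M::complex^'n^'n) ^ k"
proof (induction k)
  case 0
  then show ?case by (simp add: l1_entry_norm_mat_1)
next
  case (Suc k)
  have "l1_entry_norm (mat_pow M (Suc k)) \<le> l1_entry_norm M * l1_entry_norm (mat_pow M k)"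
    by (simp add: l1_entry_norm_mult)
  also have "\<dots> \<le> l1_entry_norm M * (real CARD('n) * l1_entry_norm M ^ k)"
    by (intro mult_left_mono Suc l1_entry_norm_nonneg)
  finally show ?case by (simp add: algebra_simps)
qed

lemma l1_entry_norm_scaleR: "l1_entry_norm (r *\<^sub>R M) = \<bar>r\<bar> * l1_entry_norm M"
  unfolding l1_entry_norm_def by (simp add: sum_distrib_left)

lemma l1_entry_norm_cscale: "l1_entry_norm (cscale c M) = cmod c * l1_entry_norm M"
  unfolding l1_entry_norm_def cscale_def by (simp add: sum_distrib_left norm_mult)

lemma op_norm_le_l1_entry_norm: "op_norm (M::complex^'n^'n) \<le> l1_entry_norm M"
  unfolding op_norm_def
proof (rule onorm_le)
  fix x :: "complex^'n"
  have "norm (M *v x) \<le> (\<Sum>i\<in>UNIV. norm ((M *v x) $ i))" by (rule norm_vec_le_sum_norm)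
  also have "\<dots> \<le> (\<Sum>i\<in>UNIV. \<Sum>j\<in>UNIV. cmod (M$i$j) * norm x)"
    unfolding matrix_vector_mult_def
    by (intro sum_mono) (auto intro!: order_trans[OF norm_sum] sum_mono mult_left_mono
        simp: norm_mult Finite_Cartesian_Product.norm_nth_le)
  also have "\<dots> = l1_entry_norm M * norm x"
    unfolding l1_entry_norm_def by (simp add: sum_distrib_right)
  finally show "norm (M *v x) \<le> l1_entry_norm M * norm x" .
qed

lemma op_norm_add_le: "op_norm (M + P :: complex^'n^'n) \<le> op_norm M + op_norm P"
  unfolding op_norm_def matrix_vector_mult_add_rdistrib
  by (intro onorm_triangle matrix_vector_mul_bounded_linear)

lemma op_norm_uminus: "op_norm (- M :: complex^'n^'n) = op_norm M"
proof -
  have "(*v) (- M) = (\<lambda>x. - (M *v x))"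
    by (simp add: fun_eq_iff vec_eq_iff matrix_vector_mult_def sum_negf)
  then show ?thesis
    unfolding op_norm_def using onorm_neg[of "(*v) M"] by simp
qed

lemma op_norm_diff_le: "op_norm (M - P :: complex^'n^'n) \<le> op_norm M + op_norm P"
  using op_norm_add_le[of M "- P"] by (simp add: op_norm_uminus)

lemma cscale_mult_vec: "cscale c M *v x = c *s (M *v x)"
  by (simp add: vec_eq_iff matrix_vector_mult_def cscale_def sum_distrib_left mult.assoc)

lemma norm_vector_scalar_mult: "norm (c *s (v::complex^'n)) = cmod c * norm v"
  unfolding norm_vec_def by (simp add: norm_mult L2_set_right_distrib)

lemma op_norm_cscale: "op_norm (cscale c (M::complex^'n^'n)) = cmod c * op_norm M"
proof (cases "c = 0")
  case True
  then show ?thesis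
    using onorm_zero by (simp add: op_norm_def cscale_mult_vec)
next
  case False
  show ?thesis
  proof (rule antisym)
    show "op_norm (cscale c M) \<le> cmod c * op_norm M"
      unfolding op_norm_def
      by (rule onorm_le)
        (simp add: cscale_mult_vec norm_vector_scalar_mult mult.assoc mult_left_mono onorm)
    have "op_norm M \<le> op_norm (cscale c M) / cmod c"
      unfolding op_norm_def
    proof (rule onorm_le)
      fix x :: "complex^'n"
      have "cmod c * norm (M *v x) \<le> onorm ((*v) (cscale c M)) * norm x"
        using onorm[of "(*v) (cscale c M)" x]
        by (simp add: cscale_mult_vec norm_vector_scalar_mult)
      then show "norm (M *v x) \<le> onorm ((*v) (cscale c M)) / cmod c * norm x"
        using False by (simp add: field_simps)
    qed
    then show "cmod c * op_norm M \<le> op_norm (cscale c M)"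
      using False by (simp add: field_simps)
  qed
qed

lemma cscale_diff: "cscale c M - cscale c P = cscale c (M - P)"
  by (simp add: vec_eq_iff cscale_def algebra_simps)

lemma summable_mat_exp_series:
  "summable (\<lambda>k. (1 / fact k) *\<^sub>R mat_pow (M::complex^'n^'n) k)"
proof (rule summable_comparison_test)
  show "\<exists>N. \<forall>k\<ge>N. norm ((1 / fact k) *\<^sub>R mat_pow M k)
      \<le> real CARD('n) * (inverse (fact k) * l1_entry_norm M ^ k)"
  proof (intro exI allI impI)
    fix k :: nat
    have "norm ((1 / fact k) *\<^sub>R mat_pow M k) \<le> (1 / fact k) * l1_entry_norm (mat_pow M k)"
      using norm_le_l1_entry_norm[of "(1 / fact k) *\<^sub>R mat_pow M k"]
      by (simp add: l1_entry_norm_scaleR)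
    also have "\<dots> \<le> (1 / fact k) * (real CARD('n) * l1_entry_norm M ^ k)"
      by (intro mult_left_mono l1_entry_norm_mat_pow) auto
    finally show "norm ((1 / fact k) *\<^sub>R mat_pow M k)
        \<le> real CARD('n) * (inverse (fact k) * l1_entry_norm M ^ k)"
      by (simp add: field_simps)
  qed
  show "summable (\<lambda>k. real CARD('n) * (inverse (fact k) * l1_entry_norm M ^ k))"
    by (intro summable_mult summable_exp)
qed

definition mat_exp_remainder :: "complex^'n^'n \<Rightarrow> complex^'n^'n" where
  "mat_exp_remainder M = (\<Sum>k. (1 / fact (k + 2)) *\<^sub>R mat_pow M (k + 2))"

lemma mat_exp_eq_remainder: "mat_exp M = mat 1 + M + mat_exp_remainder M"
proof -
  have "mat_exp M = mat_exp_remainder M + (\<Sum>k<2. (1 / fact k) *\<^sub>R mat_pow M k)"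
    unfolding mat_exp_def mat_exp_remainder_def
    by (rule suminf_split_initial_segment[OF summable_mat_exp_series])
  also have "(\<Sum>k<2. (1 / fact k) *\<^sub>R mat_pow M k) = mat 1 + M"
    by (simp add: numeral_2_eq_2 matrix_mul_rid)
  finally show ?thesis by (simp add: algebra_simps)
qed

lemma op_norm_mat_exp_remainder_cscale:
  "\<exists>K. \<forall>c. cmod c \<le> 1 \<longrightarrow>
     op_norm (mat_exp_remainder (cscale c (M::complex^'n^'n))) \<le> K * cmod c ^ 2"
proof -
  define a where "a k = real CARD('n) * (inverse (fact (k + 2)) * l1_entry_norm M ^ (k + 2))" for k
  have summable_a: "summable a"
    unfolding a_def by (intro summable_mult summable_ignore_initial_segment[OF summable_exp])
  have "op_norm (mat_exp_remainder (cscale c M)) \<le> (real CARD('n) ^ 2 * suminf a) * cmod c ^ 2"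
    if c: "cmod c \<le> 1" for c
  proof -
    have "norm ((1 / fact (k + 2)) *\<^sub>R mat_pow (cscale c M) (k + 2)) \<le> cmod c ^ 2 * a k" for k
    proof -
      have "norm ((1 / fact (k + 2)) *\<^sub>R mat_pow (cscale c M) (k + 2))
          \<le> (1 / fact (k + 2)) * l1_entry_norm (mat_pow (cscale c M) (k + 2))"
        using norm_le_l1_entry_norm[of "(1 / fact (k + 2)) *\<^sub>R mat_pow (cscale c M) (k + 2)"]
        by (simp add: l1_entry_norm_scaleR)
      also have "\<dots> \<le> (1 / fact (k + 2)) * (real CARD('n) * (cmod c * l1_entry_norm M) ^ (k + 2))"
        using l1_entry_norm_mat_pow[of "cscale c M" "k + 2"]
        by (intro mult_left_mono) (auto simp: l1_entry_norm_cscale)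
      also have "\<dots> = cmod c ^ (k + 2) * a k"
        unfolding a_def by (simp add: power_mult_distrib field_simps)
      also have "\<dots> \<le> cmod c ^ 2 * a k"
        unfolding a_def
        by (intro mult_right_mono power_decreasing) (auto simp: c l1_entry_norm_nonneg)
      finally show ?thesis .
    qed
    then have "norm (mat_exp_remainder (cscale c M)) \<le> (\<Sum>k. cmod c ^ 2 * a k)"
      unfolding mat_exp_remainder_def
      by (intro norm_suminf_le summable_mult summable_a)
    also have "\<dots> = cmod c ^ 2 * suminf a"
      by (rule suminf_mult[OF summable_a])
    finally have norm_remainder: "norm (mat_exp_remainder (cscale c M)) \<le> cmod c ^ 2 * suminf a" .
    have "op_norm (mat_exp_remainder (cscale c M))
        \<le> real CARD('n) ^ 2 * norm (mat_exp_remainder (cscale c M))"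
      using op_norm_le_l1_entry_norm l1_entry_norm_le_norm
      by (metis order_trans power2_eq_square)
    also have "\<dots> \<le> real CARD('n) ^ 2 * (cmod c ^ 2 * suminf a)"
      using norm_remainder by (intro mult_left_mono) auto
    finally show ?thesis by (simp add: mult_ac)
  qed
  then show ?thesis by blast
qed

lemma op_norm_diff_le_mat_exp_diff:
  "\<exists>K. \<forall>c. cmod c \<le> 1 \<longrightarrow>
     cmod c * op_norm (A - B :: complex^'n^'n)
       \<le> op_norm (mat_exp (cscale c A) - mat_exp (cscale c B)) + K * cmod c ^ 2"
proof -
  obtain KA where KA:
      "\<And>c. cmod c \<le> 1 \<Longrightarrow> op_norm (mat_exp_remainder (cscale c A)) \<le> KA * cmod c ^ 2"
    using op_norm_mat_exp_remainder_cscale by blast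
  obtain KB where KB:
      "\<And>c. cmod c \<le> 1 \<Longrightarrow> op_norm (mat_exp_remainder (cscale c B)) \<le> KB * cmod c ^ 2"
    using op_norm_mat_exp_remainder_cscale by blast
  have "cmod c * op_norm (A - B)
      \<le> op_norm (mat_exp (cscale c A) - mat_exp (cscale c B)) + (KA + KB) * cmod c ^ 2"
    if "cmod c \<le> 1" for c
  proof -
    let ?E = "mat_exp (cscale c A) - mat_exp (cscale c B)"
    have "cscale c (A - B) = ?E - mat_exp_remainder (cscale c A) + mat_exp_remainder (cscale c B)"
      by (simp add: mat_exp_eq_remainder cscale_diff[symmetric])
    then have "op_norm (cscale c (A - B))
        \<le> op_norm (?E - mat_exp_remainder (cscale c A)) + op_norm (mat_exp_remainder (cscale c B))"
      by (simp add: op_norm_add_le)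
    also have "\<dots> \<le> op_norm ?E + op_norm (mat_exp_remainder (cscale c A))
        + op_norm (mat_exp_remainder (cscale c B))"
      by (intro add_right_mono op_norm_diff_le)
    finally show ?thesis
      using KA[OF that] KB[OF that] op_norm_cscale[of c "A - B"]
      unfolding distrib_right by linarith
  qed
  then show ?thesis by blast
qed

lemma le_at_0_if_le_plus_linear:
  fixes \<gamma> :: "real \<Rightarrow> real"
  assumes lim: "(\<gamma> \<longlongrightarrow> \<gamma> 0) (at_right 0)"
    and bound: "\<And>t. 0 < t \<Longrightarrow> t \<le> 1 \<Longrightarrow> a \<le> \<gamma> t + K * t"
  shows "a \<le> \<gamma> 0"
proof (rule tendsto_le[OF trivial_limit_at_right_real])
  show "((\<lambda>t. \<gamma> t + K * t) \<longlongrightarrow> \<gamma> 0) (at_right 0)"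
    using tendsto_add[OF lim tendsto_mult_right_zero[OF tendsto_ident_at]] by simp
  have "\<forall>\<^sub>F t in at_right 0. t \<in> {0<..<1::real}"
    by (rule eventually_at_right_real) simp
  then show "\<forall>\<^sub>F t in at_right 0. a \<le> \<gamma> t + K * t"
    by eventually_elim (simp add: bound)
qed simp

theorem mainTheorem4:
  fixes A B :: "complex^'n^'n" and \<gamma> :: "real \<Rightarrow> real"
  assumes "hermitian A" and "hermitian B"
    and "mono_on {0..} \<gamma>" and "continuous_on {0..} \<gamma>"
    and "\<And>t. t \<ge> 0 \<Longrightarrow>
      op_norm (mat_exp (cscale (- \<i> * complex_of_real t) A) - mat_exp (cscale (- \<i> * complex_of_real t) B)) \<le> t * \<gamma> t"
  shows "\<forall>t\<ge>0. op_norm (A - B) \<le> \<gamma> t"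
proof -
  obtain K where K: "\<And>c. cmod c \<le> 1 \<Longrightarrow> cmod c * op_norm (A - B)
      \<le> op_norm (mat_exp (cscale c A) - mat_exp (cscale c B)) + K * cmod c ^ 2"
    using op_norm_diff_le_mat_exp_diff by blast
  have linear_bound: "op_norm (A - B) \<le> \<gamma> t + K * t" if "0 < t" "t \<le> 1" for t
  proof -
    have "t * op_norm (A - B) \<le> t * (\<gamma> t + K * t)"
      using K[of "- \<i> * complex_of_real t"] assms(5)[of t] that
      by (simp add: norm_mult power2_eq_square algebra_simps)
    then show ?thesis
      using \<open>0 < t\<close> by simp
  qed
  have "(\<gamma> \<longlongrightarrow> \<gamma> 0) (at 0 within {0..})"
    using assms(4) by (simp add: continuous_on_def)
  then have "(\<gamma> \<longlongrightarrow> \<gamma> 0) (at_right 0)"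
    by (rule tendsto_within_subset) auto
  then have "op_norm (A - B) \<le> \<gamma> 0"
    using linear_bound by (rule le_at_0_if_le_plus_linear)
  then show ?thesis
    using assms(3) by (auto intro: order_trans mono_onD)
qed

end
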